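(* Assume $W$ satisfies (h) and (h* ) as in the context, and let \[ c^*:=\sup\Big\{c>0:\ \text{there exists } L\ge1 \text{ with } \inf_{V\in\mathcal{X}_L}E_c(V)<0\Big\} \] (the speed of the heteroclinic travelling wave $U_{xx}-\nabla W(U)=-cU_x$, $U(\pm\infty)=a^\pm$). Then \[ c^*=\sup\Big\{c>0:\ \inf_{V\in\mathcal{X}}E_c(V)<0\Big\},\qquad \mathcal{X}:=\{V\in[H^1_{\mathrm{loc}}(\mathbb{R})]^N: V(\pm\infty)=a^\pm\}. \]
   Context: $W\in C^2_{\mathrm{loc}}(\mathbb{R}^N)$. Hypothesis (h* ): $a^\pm$ are minima, $W(a^-)<0=W(a^+)$, $\min W=W(a^-)$; there is $\alpha_0>0$ such that for every $\alpha\in(0,\alpha_0]$, $W^{-1}(\{\alpha\})=\partial\mathcal{C}^-_\alpha\cup\partial\mathcal{C}^+_\alpha$, $\{W\le\alpha\}=\mathcal{C}^-_\alpha\cup\mathcal{C}^+_\alpha$, with $\mathcal{C}^\pm_\alpha$ disjoint compact convex sets with $C^2$ boundaries containing $a^\pm$; with $\mathcal{C}^-_0$ the component of $\{W\le0\}$ containing $a^-$ and $n$ its outward normal, $\nabla W\cdot n\ge c_0>0$ and $D^2W\ge c_0I$ on $\partial\mathcal{C}^-_0$; and $r\mapsto W(a^-+r\xi)$ has strictly positive derivative for $r>0$ while $a^-+r\xi\in\mathcal{C}^-_{\alpha_0}$, $|\xi|=1$. Hypothesis (h): there is $R_0>0$ with $\frac{d}{dr}W(a^\pm+r\xi)>0$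 for $r\in(0,R_0)$, $|\xi|=1$. $r_0\in(0,R_0)$ with $W\ge0$ on $\{|u-a^+|\le r_0\}$, $W<0$ on $\{|u-a^-|\le r_0\}$. $E_c(U):=\int_{\mathbb{R}}(\tfrac12|U_x|^2+W(U))e^{cx}dx$; $\mathcal{X}_L:=\{U\in[H^1_{\mathrm{loc}}(\mathbb{R})]^N: |U(x)-a^+|\le r_0\ (x\ge L),\ |U(x)-a^-|\le r_0\ (x\le-L)\}$. *)

theory Defs
  imports "HOL-Analysis.Analysis"
begin

definition C2_on :: "'a set \<Rightarrow> ('a::euclidean_space \<Rightarrow> real) \<Rightarrow> ('a \<Rightarrow> 'a) \<Rightarrow> ('a \<Rightarrow> 'a \<Rightarrow>\<^sub>L 'a) \<Rightarrow> bool" where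
  "C2_on S f G H \<longleftrightarrow>
     (\<forall>x\<in>S. (f has_derivative (\<lambda>h. G x \<bullet> h)) (at x) \<and>
             (G has_derivative (\<lambda>h. blinfun_apply (H x) h)) (at x)) \<and> continuous_on S H"

definition C2_defining_fn :: "'a::euclidean_space set \<Rightarrow> 'a \<Rightarrow> 'a set \<Rightarrow> ('a \<Rightarrow> real) \<Rightarrow> ('a \<Rightarrow> 'a) \<Rightarrow> bool" where
  "C2_defining_fn S p U \<phi> G \<longleftrightarrow> open U \<and> p \<in> U \<and> (\<exists>H. C2_on U \<phi> G H) \<and> G p \<noteq> 0 \<and>
     S \<inter> U = {x\<in>U. \<phi> x \<le> 0}"

definition C2_boundary :: "'a::euclidean_space set \<Rightarrow> bool" where
  "C2_boundary S \<longleftrightarrow> (\<forall>p\<in>frontier S. \<exists>U \<phi> G. C2_defining_fn S p U \<phi> G)"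

definition outward_normal :: "'a::euclidean_space set \<Rightarrow> 'a \<Rightarrow> 'a \<Rightarrow> bool" where
  "outward_normal S p n \<longleftrightarrow> p \<in> frontier S \<and>
     (\<exists>U \<phi> G. C2_defining_fn S p U \<phi> G \<and> n = (1 / norm (G p)) *\<^sub>R G p)"

text \<open>U' is a weak derivative of U (U the continuous representative of an H^1_loc function).\<close>
definition weak_deriv :: "(real \<Rightarrow> 'a::euclidean_space) \<Rightarrow> (real \<Rightarrow> 'a) \<Rightarrow> bool" where
  "weak_deriv U U' \<longleftrightarrow> (\<forall>a b. a \<le> b \<longrightarrow>
      U' absolutely_integrable_on {a..b} \<and>
      (\<lambda>x. (norm (U' x))\<^sup>2) integrable_on {a..b} \<and>
      (U' has_integral (U b - U a)) {a..b})"

definition H1loc :: "(real \<Rightarrow> 'a::euclidean_space) \<Rightarrow> bool" where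
  "H1loc U \<longleftrightarrow> (\<exists>U'. weak_deriv U U')"

definition energy :: "('a::euclidean_space \<Rightarrow> real) \<Rightarrow> real \<Rightarrow> (real \<Rightarrow> 'a) \<Rightarrow> (real \<Rightarrow> 'a) \<Rightarrow> ereal" where
  "energy W c U U' =
     (let f = (\<lambda>x. (1/2 * (norm (U' x))\<^sup>2 + W (U x)) * exp (c * x)) in
      enn2ereal (\<integral>\<^sup>+ x. ennreal (f x) \<partial>lborel) - enn2ereal (\<integral>\<^sup>+ x. ennreal (- f x) \<partial>lborel))"

definition energies :: "('a::euclidean_space \<Rightarrow> real) \<Rightarrow> real \<Rightarrow> (real \<Rightarrow> 'a) set \<Rightarrow> ereal set" where
  "energies W c A = {energy W c U U' | U U'. U \<in> A \<and> weak_deriv U U'}"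

definition XL :: "'a::euclidean_space \<Rightarrow> 'a \<Rightarrow> real \<Rightarrow> real \<Rightarrow> (real \<Rightarrow> 'a) set" where
  "XL am ap r0 L = {U. H1loc U \<and> (\<forall>x\<ge>L. norm (U x - ap) \<le> r0) \<and> (\<forall>x\<le>-L. norm (U x - am) \<le> r0)}"

definition Xinf :: "'a::euclidean_space \<Rightarrow> 'a \<Rightarrow> (real \<Rightarrow> 'a) set" where
  "Xinf am ap = {U. H1loc U \<and> (U \<longlongrightarrow> ap) at_top \<and> (U \<longlongrightarrow> am) at_bot}"

end

theory Submission
  imports Defs "HOL-Real_Asymp.Real_Asymp"
begin

text \<open>
  Any profile with limits \<open>a\<^sup>\<plusminus>\<close> at \<open>\<plusminus>\<infinity>\<close> lies in some \<open>\<X>\<^sub>L\<close>, so only the converse needs work.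
  Let \<open>U \<in> \<X>\<^sub>L\<close> have \<open>E\<^sub>c(U) < 0\<close>; then the positive part of the energy is some finite \<open>P\<close>.
  Beyond \<open>L\<close> the potential is nonnegative, and \<open>|U'| \<le> \<lambda> e\<^bsup>cx\<^esup>|U'|\<^sup>2/2 + e\<^bsup>-cx\<^esup>/(2\<lambda>)\<close> with
  \<open>\<lambda> = e\<^bsup>-cT/2\<^esup>\<close> bounds the oscillation of \<open>U\<close> on \<open>[T,\<infinity>)\<close> by \<open>e\<^bsup>-cT/2\<^esup>(P + 1/(2c))\<close>.
  So \<open>U\<close> converges at \<open>+\<infinity>\<close>; the limit is a zero of \<open>W\<close> (otherwise the weighted energy diverges)
  in the ball of radius \<open>r\<^sub>0\<close> about \<open>a\<^sup>+\<close>, hence \<open>a\<^sup>+\<close> itself by radial monotonicity.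
  At \<open>-\<infinity>\<close>, replace \<open>U\<close> left of \<open>T \<le> -L\<close> by \<open>a\<^sup>-\<close>, joined to \<open>U(T)\<close> by a segment on \<open>[T-1,T]\<close>.
  This raises the positive part of the energy by at most \<open>r\<^sub>0\<^sup>2 e\<^bsup>cT\<^esup>/2\<close> and lowers the negative part by at
  most \<open>-W(a\<^sup>-) e\<^bsup>cT\<^esup>\<close>, which is harmless for \<open>T\<close> very negative.
\<close>

section \<open>Weak derivatives on subsets of the line\<close>

definition sq_integrable_has_integral :: "(real \<Rightarrow> 'a::euclidean_space) \<Rightarrow> 'a \<Rightarrow> real \<Rightarrow> real \<Rightarrow> bool" where
  "sq_integrable_has_integral f I a b \<longleftrightarrow>
     f absolutely_integrable_on {a..b} \<and> (\<lambda>x. (norm (f x))\<^sup>2) integrable_on {a..b} \<and>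
     (f has_integral I) {a..b}"

definition weak_deriv_on :: "real set \<Rightarrow> (real \<Rightarrow> 'a::euclidean_space) \<Rightarrow> (real \<Rightarrow> 'a) \<Rightarrow> bool" where
  "weak_deriv_on S U U' \<longleftrightarrow>
     (\<forall>a b. a \<le> b \<longrightarrow> {a..b} \<subseteq> S \<longrightarrow> sq_integrable_has_integral U' (U b - U a) a b)"

lemma weak_deriv_iff_weak_deriv_on_UNIV: "weak_deriv U U' \<longleftrightarrow> weak_deriv_on UNIV U U'"
  unfolding weak_deriv_def weak_deriv_on_def sq_integrable_has_integral_def by auto

lemma weak_derivD:
  assumes "weak_deriv U U'" "a \<le> b"
  shows "U' absolutely_integrable_on {a..b}" "(U' has_integral (U b - U a)) {a..b}"
  using assms unfolding weak_deriv_def by auto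

lemma weak_deriv_on_cong:
  "weak_deriv_on S U U' \<Longrightarrow> (\<And>x. x \<in> S \<Longrightarrow> V x = U x) \<Longrightarrow> weak_deriv_on S V U'"
  unfolding weak_deriv_on_def by (metis atLeastAtMost_iff order_refl subset_iff)

lemma weak_deriv_on_subset: "weak_deriv_on S U U' \<Longrightarrow> T \<subseteq> S \<Longrightarrow> weak_deriv_on T U U'"
  unfolding weak_deriv_on_def by blast

lemma weak_deriv_on_affine:
  assumes "\<And>x. x \<in> S \<Longrightarrow> U x = p + x *\<^sub>R d"
  shows "weak_deriv_on S U (\<lambda>_. d)"
  unfolding weak_deriv_on_def sq_integrable_has_integral_def
proof (intro allI impI conjI)
  fix a b assume ab: "a \<le> b" "{a..b} \<subseteq> S"
  then have "a \<in> S" "b \<in> S" by auto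
  then have "U b - U a = (b - a) *\<^sub>R d" using assms by (auto simp: algebra_simps)
  then show "((\<lambda>_. d) has_integral (U b - U a)) {a..b}"
    using ab has_integral_const_real[of d a b] by simp
qed auto

lemma sq_integrable_has_integral_spike_finite:
  assumes g: "sq_integrable_has_integral g I a b" and F: "finite F"
    and eq: "\<And>x. x \<in> {a..b} - F \<Longrightarrow> f x = g x"
  shows "sq_integrable_has_integral f I a b"
  unfolding sq_integrable_has_integral_def
proof (intro conjI)
  show "f absolutely_integrable_on {a..b}"
    using absolutely_integrable_spike[where f=g and T="{a..b}" and S=F and g=f] g negligible_finite[OF F] eq
    unfolding sq_integrable_has_integral_def by blast
  show "(\<lambda>x. (norm (f x))\<^sup>2) integrable_on {a..b}"
    using g eq unfolding sq_integrable_has_integral_def by (auto intro: integrable_spike_finite[OF F])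
  show "(f has_integral I) {a..b}"
    using g eq has_integral_spike_finite_eq[OF F, of "{a..b}" f g I]
    unfolding sq_integrable_has_integral_def by auto
qed

lemma sq_integrable_has_integral_combine:
  assumes "a \<le> c" "c \<le> b" and ac: "sq_integrable_has_integral f I a c"
    and cb: "sq_integrable_has_integral f J c b"
  shows "sq_integrable_has_integral f (I + J) a b"
  unfolding sq_integrable_has_integral_def
proof (intro conjI)
  show "f absolutely_integrable_on {a..b}"
    using ac cb assms(1,2) unfolding sq_integrable_has_integral_def
    by (auto intro!: absolutely_integrable_on_combine[where c=c])
  show "(\<lambda>x. (norm (f x))\<^sup>2) integrable_on {a..b}"
    using ac cb assms(1,2) unfolding sq_integrable_has_integral_def
    by (auto intro!: Henstock_Kurzweil_Integration.integrable_combine[where c=c])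
  show "(f has_integral (I + J)) {a..b}"
    using ac cb assms(1,2) unfolding sq_integrable_has_integral_def
    by (auto intro!: has_integral_combine[where c=c])
qed

lemma weak_deriv_on_glue:
  assumes left: "weak_deriv_on (S \<inter> {..s}) U V1" and right: "weak_deriv_on (S \<inter> {s..}) U V2"
    and eq1: "\<And>x. x < s \<Longrightarrow> U' x = V1 x" and eq2: "\<And>x. x > s \<Longrightarrow> U' x = V2 x"
  shows "weak_deriv_on S U U'"
  unfolding weak_deriv_on_def
proof (intro allI impI)
  have L: "sq_integrable_has_integral U' (U c - U a) a c" if "a \<le> c" "c \<le> s" "{a..c} \<subseteq> S" for a c
  proof -
    have "{a..c} \<subseteq> S \<inter> {..s}" using that by auto
    then have "sq_integrable_has_integral V1 (U c - U a) a c"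
      using left that(1) unfolding weak_deriv_on_def by blast
    then show ?thesis by (rule sq_integrable_has_integral_spike_finite[where F="{s}"]) (use eq1 that in auto)
  qed
  have R: "sq_integrable_has_integral U' (U b - U c) c b" if "c \<le> b" "s \<le> c" "{c..b} \<subseteq> S" for b c
  proof -
    have "{c..b} \<subseteq> S \<inter> {s..}" using that by auto
    then have "sq_integrable_has_integral V2 (U b - U c) c b"
      using right that(1) unfolding weak_deriv_on_def by blast
    then show ?thesis by (rule sq_integrable_has_integral_spike_finite[where F="{s}"]) (use eq2 that in auto)
  qed
  fix a b assume ab: "a \<le> b" "{a..b} \<subseteq> S"
  consider "b \<le> s" | "s \<le> a" | "a \<le> s" "s \<le> b" by linarith
  then show "sq_integrable_has_integral U' (U b - U a) a b"
  proof cases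
    case 1
    then show ?thesis using L ab by blast
  next
    case 2
    then show ?thesis using R ab by blast
  next
    case 3
    have "{a..s} \<subseteq> S" "{s..b} \<subseteq> S" using ab 3 by auto
    then show ?thesis using sq_integrable_has_integral_combine[OF 3 L R] 3 by simp
  qed
qed

lemma weak_deriv_continuous:
  assumes "weak_deriv U U'" shows "continuous_on UNIV U"
proof -
  have "isCont U x" for x
  proof -
    have ab: "x - 1 \<le> x + 1" by simp
    have int: "U' integrable_on {x - 1..x + 1}"
      using weak_derivD(1)[OF assms ab] absolutely_integrable_on_def by blast
    have "U y = U (x - 1) + integral {x - 1..y} U'" if "y \<in> {x - 1..x + 1}" for y
      using weak_derivD(2)[OF assms, of "x - 1" y] that by (simp add: integral_unique)
    moreover have "continuous_on {x - 1..x + 1} (\<lambda>y. U (x - 1) + integral {x - 1..y} U')"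
      using indefinite_integral_continuous_1[OF int] by (intro continuous_intros)
    ultimately have "continuous_on {x - 1..x + 1} U" using continuous_on_cong by (metis (no_types, lifting))
    moreover have "x \<in> interior {x - 1..x + 1}" by simp
    ultimately show ?thesis using continuous_on_interior by blast
  qed
  then show ?thesis by (simp add: continuous_at_imp_continuous_on)
qed

lemma weak_deriv_measurable:
  assumes "weak_deriv U U'" shows "U' \<in> borel_measurable lebesgue"
proof -
  have meas: "(\<lambda>x. if x \<in> {-real n..real n} then U' x else 0) measurable_on UNIV" for n
  proof -
    have "U' integrable_on {-real n..real n}"
      using weak_derivD(1)[OF assms, of "-real n" "real n"] absolutely_integrable_on_def by auto
    then have "U' \<in> borel_measurable (lebesgue_on {-real n..real n})" by (rule integrable_imp_measurable)
    then have "U' measurable_on {-real n..real n}" by (subst measurable_on_iff_borel_measurable) auto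
    then show ?thesis unfolding measurable_on_UNIV .
  qed
  have lim: "(\<lambda>n. if x \<in> {-real n..real n} then U' x else 0) \<longlonglongrightarrow> U' x" if "x \<in> UNIV - {}" for x
  proof (rule tendsto_eventually)
    show "\<forall>\<^sub>F n in sequentially. (if x \<in> {- real n..real n} then U' x else 0) = U' x"
      unfolding eventually_sequentially
    proof (intro exI allI impI)
      fix n assume "nat \<lceil>\<bar>x\<bar>\<rceil> \<le> n"
      then have "\<bar>x\<bar> \<le> real n" by linarith
      then show "(if x \<in> {- real n..real n} then U' x else 0) = U' x" by auto
    qed
  qed
  have "U' measurable_on UNIV"
    by (rule measurable_on_limit[OF meas negligible_empty lim])
  then show ?thesis by (rule measurable_on_imp_borel_measurable_lebesgue_UNIV)
qed

section \<open>The weighted energy\<close>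

definition energy_density ::
    "('a::euclidean_space \<Rightarrow> real) \<Rightarrow> real \<Rightarrow> (real \<Rightarrow> 'a) \<Rightarrow> (real \<Rightarrow> 'a) \<Rightarrow> real \<Rightarrow> real" where
  "energy_density W c U U' x = (1/2 * (norm (U' x))\<^sup>2 + W (U x)) * exp (c * x)"

lemma enn2ereal_diff_less_zero_iff: "enn2ereal a - enn2ereal b < 0 \<longleftrightarrow> a < b"
proof
  show "enn2ereal a - enn2ereal b < 0 \<Longrightarrow> a < b"
    by (meson ereal_diff_positive leD leI less_ennreal.rep_eq)
  show "a < b \<Longrightarrow> enn2ereal a - enn2ereal b < 0"
    by (metis Infty_neq_0(3) abs_ereal_ge0 add_0 enn2ereal_nonneg ereal_diff_eq_MInfty_iff
        ereal_minus_less less_ennreal.rep_eq less_ereal.simps(2,3) linorder_less_linear)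
qed

lemma energy_less_zero_iff:
  "energy W c U U' < 0 \<longleftrightarrow>
     (\<integral>\<^sup>+x. ennreal (energy_density W c U U' x) \<partial>lborel)
       < (\<integral>\<^sup>+x. ennreal (- energy_density W c U U' x) \<partial>lborel)"
  unfolding energy_def energy_density_def Let_def enn2ereal_diff_less_zero_iff ..

lemma Inf_energies_less_zero_iff:
  "Inf (energies W c A) < 0 \<longleftrightarrow> (\<exists>U U'. U \<in> A \<and> weak_deriv U U' \<and> energy W c U U' < 0)"
  unfolding energies_def Inf_less_iff by blast

lemma energy_density_measurable:
  assumes "weak_deriv U U'" "continuous_on UNIV W"
  shows "energy_density W c U U' \<in> borel_measurable lebesgue"
proof -
  have [measurable]: "U' \<in> borel_measurable lebesgue" using weak_deriv_measurable[OF assms(1)] .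
  have "continuous_on UNIV (\<lambda>x. W (U x))"
    using continuous_on_compose2[OF assms(2) weak_deriv_continuous[OF assms(1)]] by auto
  then have [measurable]: "(\<lambda>x. W (U x)) \<in> borel_measurable lebesgue"
    using continuous_imp_measurable_on_sets_lebesgue[of UNIV] lebesgue_on_UNIV_eq by fastforce
  have "continuous_on UNIV (\<lambda>x::real. exp (c * x))" by (intro continuous_intros)
  then have [measurable]: "(\<lambda>x::real. exp (c * x)) \<in> borel_measurable lebesgue"
    using continuous_imp_measurable_on_sets_lebesgue[of UNIV] lebesgue_on_UNIV_eq by fastforce
  show ?thesis unfolding energy_density_def by measurable
qed

lemma nn_integral_le_cmult_pos_part_add:
  fixes u v h :: "real \<Rightarrow> real"
  assumes v: "v \<in> borel_measurable lebesgue" and h: "h \<in> borel_measurable borel"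
    and h_nonneg: "\<And>x. 0 \<le> h x" and l: "0 \<le> l"
    and le: "\<And>x. u x \<le> l * max (v x) 0 + h x"
  shows "(\<integral>\<^sup>+x. ennreal (u x) \<partial>lborel)
           \<le> ennreal l * (\<integral>\<^sup>+x. ennreal (v x) \<partial>lborel) + (\<integral>\<^sup>+x. ennreal (h x) \<partial>lborel)"
proof -
  obtain v' where v': "v' \<in> borel_measurable lborel" and ae: "AE x in lborel. v x = v' x"
    using completion_ex_borel_measurable_real[OF v] by blast
  have "(\<integral>\<^sup>+x. ennreal (u x) \<partial>lborel) \<le> (\<integral>\<^sup>+x. ennreal l * ennreal (v' x) + ennreal (h x) \<partial>lborel)"
  proof (rule nn_integral_mono_AE)
    show "AE x in lborel. ennreal (u x) \<le> ennreal l * ennreal (v' x) + ennreal (h x)"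
      using ae
    proof eventually_elim
      fix x assume "v x = v' x"
      have "ennreal (u x) \<le> ennreal (l * max (v x) 0 + h x)" using le by (intro ennreal_leI) auto
      also have "\<dots> = ennreal l * ennreal (v x) + ennreal (h x)"
        using l h_nonneg[of x] by (simp add: ennreal_plus ennreal_mult max_def ennreal_neg)
      finally show "ennreal (u x) \<le> ennreal l * ennreal (v' x) + ennreal (h x)"
        using \<open>v x = v' x\<close> by simp
    qed
  qed
  also have "\<dots> = ennreal l * (\<integral>\<^sup>+x. ennreal (v' x) \<partial>lborel) + (\<integral>\<^sup>+x. ennreal (h x) \<partial>lborel)"
    using v' h by (simp add: nn_integral_add nn_integral_cmult)
  also have "(\<integral>\<^sup>+x. ennreal (v' x) \<partial>lborel) = (\<integral>\<^sup>+x. ennreal (v x) \<partial>lborel)"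
    using ae by (intro nn_integral_cong_AE) auto
  finally show ?thesis .
qed

lemma nn_integral_indicator_eq_has_integral:
  fixes f :: "real \<Rightarrow> real"
  assumes "(f has_integral I) {a..b}" "\<And>x. x \<in> {a..b} \<Longrightarrow> 0 \<le> f x"
  shows "(\<integral>\<^sup>+x. ennreal (f x * indicator {a..b} x) \<partial>lborel) = ennreal I"
proof -
  have "(\<integral>\<^sup>+x. ennreal (f x * indicator {a..b} x) \<partial>lborel)
      = (\<integral>\<^sup>+x. ennreal (f x) * indicator {a..b} x \<partial>lborel)"
    by (intro nn_integral_cong) (auto simp: indicator_def)
  also have "\<dots> = ennreal I" by (rule nn_integral_has_integral_lebesgue'[OF assms(2,1)])
  finally show ?thesis .
qed

lemma nn_integral_const_indicator_unit_interval:
  fixes k T :: real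
  assumes "0 \<le> k"
  shows "(\<integral>\<^sup>+x. ennreal (k * indicator {T - 1..T} x) \<partial>lborel) = ennreal k"
  using nn_integral_indicator_eq_has_integral[OF has_integral_const_real[of k "T - 1" T]] assms
  by simp

section \<open>Decay of finite-energy profiles at \<open>+\<infinity>\<close>\<close>

lemma tendsto_at_top_of_oscillation_bound:
  fixes U :: "real \<Rightarrow> 'a::banach"
  assumes g: "(g \<longlongrightarrow> 0) at_top"
    and bound: "\<And>T y. M \<le> T \<Longrightarrow> T \<le> y \<Longrightarrow> dist (U y) (U T) \<le> g T"
  shows "\<exists>p. (U \<longlongrightarrow> p) at_top"
proof -
  define s where "s n = U (real n)" for n
  have "Cauchy s"
  proof (rule metric_CauchyI)
    fix e :: real assume "e > 0"
    then obtain N0 where N0: "\<And>T. T \<ge> N0 \<Longrightarrow> g T < e"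
      using order_tendstoD(2)[OF g] unfolding eventually_at_top_linorder by blast
    define N where "N = nat \<lceil>max M N0\<rceil>"
    have close: "dist (s m) (s n) < e" if "m \<ge> N" "n \<ge> N" "m \<le> n" for m n
    proof -
      have "max M N0 \<le> real m" using that(1) unfolding N_def by linarith
      then show ?thesis
        using bound[of "real m" "real n"] N0[of "real m"] that unfolding s_def by (simp add: dist_commute)
    qed
    show "\<exists>N. \<forall>m\<ge>N. \<forall>n\<ge>N. dist (s m) (s n) < e"
      using close dist_commute by (metis nle_le)
  qed
  then obtain p where p: "s \<longlonglongrightarrow> p" using Cauchy_convergent_iff convergent_def by blast
  have "dist (U x) p \<le> g x" if "x \<ge> M" for x
  proof (rule LIMSEQ_le_const2)
    show "(\<lambda>n. dist (U x) (s n)) \<longlonglongrightarrow> dist (U x) p" by (intro tendsto_intros p)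
    show "\<exists>N. \<forall>n\<ge>N. dist (U x) (s n) \<le> g x"
    proof (intro exI allI impI)
      fix n assume "nat \<lceil>x\<rceil> \<le> n"
      then have "x \<le> real n" by linarith
      then show "dist (U x) (s n) \<le> g x"
        using bound[of x "real n"] that unfolding s_def by (simp add: dist_commute)
    qed
  qed
  then have "((\<lambda>x. U x - p) \<longlongrightarrow> 0) at_top"
    by (intro Lim_null_comparison[OF _ g]) (auto simp: eventually_at_top_linorder dist_norm)
  then show ?thesis using LIM_zero_cancel by blast
qed

lemma le_weighted_square_plus_inverse:
  fixes a q :: real
  assumes "q > 0"
  shows "a \<le> q * a\<^sup>2 / 2 + 1 / (2 * q)"
proof -
  have "0 \<le> (q * a - 1)\<^sup>2" by simp
  then have "2 * q * a \<le> q\<^sup>2 * a\<^sup>2 + 1" by (simp add: power2_eq_square algebra_simps)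
  with assms show ?thesis by (simp add: field_simps power2_eq_square)
qed

lemma has_integral_exp_neg:
  fixes T y c k :: real
  assumes "T \<le> y" "c > 0" "k > 0"
  shows "((\<lambda>x. exp (-(c * x)) / k) has_integral ((exp (-(c * T)) - exp (-(c * y))) / (k * c))) {T..y}"
proof -
  have "((\<lambda>x. exp (-(c * x)) / k) has_integral
      (- exp (-(c * y)) / (k * c) - - exp (-(c * T)) / (k * c))) {T..y}"
  proof (rule fundamental_theorem_of_calculus[OF assms(1)])
    fix x
    have "((\<lambda>x. - exp (-(c * x)) / (k * c)) has_real_derivative (- (exp (-(c * x)) * (- c)) / (k * c))) (at x)"
      using assms by (intro derivative_eq_intros) auto
    then show "((\<lambda>x. - exp (-(c * x)) / (k * c)) has_vector_derivative exp (-(c * x)) / k) (at x within {T..y})"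
      using assms by (auto simp: has_real_derivative_iff_has_vector_derivative intro: has_vector_derivative_at_within)
  qed
  then show ?thesis by (simp add: diff_divide_distrib)
qed

lemma norm_deriv_le_energy_density:
  assumes "0 \<le> W (U x)" "l > 0"
  shows "norm (U' x) \<le> l * energy_density W c U U' x + exp (-(c * x)) / (2 * l)"
proof -
  define q where "q = l * exp (c * x)"
  have "q > 0" unfolding q_def using assms(2) by simp
  have "norm (U' x) \<le> q * (norm (U' x))\<^sup>2 / 2 + 1 / (2 * q)"
    by (rule le_weighted_square_plus_inverse[OF \<open>q > 0\<close>])
  also have "q * (norm (U' x))\<^sup>2 / 2 \<le> l * energy_density W c U U' x"
    using assms unfolding q_def energy_density_def by (simp add: algebra_simps)
  also have "1 / (2 * q) = exp (-(c * x)) / (2 * l)"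
    unfolding q_def by (simp add: exp_minus field_simps)
  finally show ?thesis by simp
qed

lemma integral_norm_deriv_le_energy:
  fixes U U' :: "real \<Rightarrow> 'a::euclidean_space"
  assumes wd: "weak_deriv U U'" and Wc: "continuous_on UNIV W" and c: "c > 0"
    and nonneg: "\<And>x. x \<ge> L \<Longrightarrow> W (U x) \<ge> 0"
    and P: "(\<integral>\<^sup>+x. ennreal (energy_density W c U U' x) \<partial>lborel) = ennreal P" "P \<ge> 0"
    and T: "L \<le> T" "T \<le> y" and "l > 0"
  shows "integral {T..y} (\<lambda>x. norm (U' x)) \<le> l * P + (exp (-(c * T)) - exp (-(c * y))) / (2 * l * c)"
proof -
  define I where "I = integral {T..y} (\<lambda>x. norm (U' x))"
  have "(\<lambda>x. norm (U' x)) integrable_on {T..y}"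
    using weak_derivD(1)[OF wd T(2)] by (auto simp: absolutely_integrable_on_def)
  then have I_int: "(\<integral>\<^sup>+x. ennreal (norm (U' x) * indicator {T..y} x) \<partial>lborel) = ennreal I"
    unfolding I_def by (intro nn_integral_indicator_eq_has_integral) auto
  define E where "E = (exp (-(c * T)) - exp (-(c * y))) / (2 * l * c)"
  have E: "((\<lambda>x. exp (-(c * x)) / (2 * l)) has_integral E) {T..y}"
    unfolding E_def by (rule has_integral_exp_neg) (use T c \<open>l > 0\<close> in auto)
  have "E \<ge> 0" by (rule has_integral_nonneg[OF E]) (use \<open>l > 0\<close> in auto)
  have E_int: "(\<integral>\<^sup>+x. ennreal (exp (-(c * x)) / (2 * l) * indicator {T..y} x) \<partial>lborel) = ennreal E"
    by (rule nn_integral_indicator_eq_has_integral[OF E]) (use \<open>l > 0\<close> in auto)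
  have hm: "(\<lambda>x. exp (-(c * x)) / (2 * l) * indicator {T..y} x) \<in> borel_measurable borel"
  proof (rule borel_measurable_times)
    show "(\<lambda>x. exp (- (c * x)) / (2 * l)) \<in> borel_measurable borel"
      by (intro borel_measurable_continuous_onI continuous_intros) (use \<open>l > 0\<close> in auto)
  qed simp
  have pw: "norm (U' x) * indicator {T..y} x
      \<le> l * max (energy_density W c U U' x) 0 + exp (-(c * x)) / (2 * l) * indicator {T..y} x" for x
  proof (cases "x \<in> {T..y}")
    case True
    then have "norm (U' x) \<le> l * energy_density W c U U' x + exp (-(c * x)) / (2 * l)"
      using nonneg T \<open>l > 0\<close> by (intro norm_deriv_le_energy_density) auto
    moreover have "l * energy_density W c U U' x \<le> l * max (energy_density W c U U' x) 0"
      using \<open>l > 0\<close> by (intro mult_left_mono) auto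
    ultimately show ?thesis using True by simp
  qed (use \<open>l > 0\<close> in simp)
  have "(\<integral>\<^sup>+x. ennreal (norm (U' x) * indicator {T..y} x) \<partial>lborel)
      \<le> ennreal l * (\<integral>\<^sup>+x. ennreal (energy_density W c U U' x) \<partial>lborel)
        + (\<integral>\<^sup>+x. ennreal (exp (-(c * x)) / (2 * l) * indicator {T..y} x) \<partial>lborel)"
    by (rule nn_integral_le_cmult_pos_part_add[OF energy_density_measurable[OF wd Wc] hm _ _ pw])
      (use \<open>l > 0\<close> in \<open>auto simp: indicator_def\<close>)
  then have "ennreal I \<le> ennreal (l * P) + ennreal E"
    unfolding I_int E_int P(1) using \<open>l > 0\<close> P(2) by (simp add: ennreal_mult)
  also have "\<dots> = ennreal (l * P + E)"
    using \<open>l > 0\<close> P(2) \<open>E \<ge> 0\<close> by (intro ennreal_plus[symmetric]) auto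
  finally show ?thesis
    using ennreal_le_iff[of "l * P + E" I] \<open>l > 0\<close> P(2) \<open>E \<ge> 0\<close> unfolding I_def E_def by simp
qed

lemma weak_deriv_tail_oscillation_bound:
  fixes U U' :: "real \<Rightarrow> 'a::euclidean_space"
  assumes wd: "weak_deriv U U'" and Wc: "continuous_on UNIV W" and c: "c > 0"
    and nonneg: "\<And>x. x \<ge> L \<Longrightarrow> W (U x) \<ge> 0"
    and P: "(\<integral>\<^sup>+x. ennreal (energy_density W c U U' x) \<partial>lborel) = ennreal P" "P \<ge> 0"
    and T: "L \<le> T" "T \<le> y"
  shows "norm (U y - U T) \<le> exp (-(c * T / 2)) * (P + 1 / (2 * c))"
proof -
  define l where "l = exp (-(c * T / 2))"
  have "l > 0" unfolding l_def by simp
  have "U' integrable_on {T..y}" "(\<lambda>x. norm (U' x)) integrable_on {T..y}"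
    using weak_derivD(1)[OF wd T(2)] by (auto simp: absolutely_integrable_on_def)
  then have "norm (U y - U T) \<le> integral {T..y} (\<lambda>x. norm (U' x))"
    using integral_norm_bound_integral weak_derivD(2)[OF wd T(2)] by (metis integral_unique order_refl)
  also have "\<dots> \<le> l * P + (exp (-(c * T)) - exp (-(c * y))) / (2 * l * c)"
    by (rule integral_norm_deriv_le_energy[OF wd Wc c nonneg P T \<open>l > 0\<close>])
  also have "\<dots> \<le> l * P + exp (-(c * T)) / (2 * l * c)"
    using \<open>l > 0\<close> c by (intro add_left_mono divide_right_mono) auto
  also have "exp (-(c * T)) = l * l" unfolding l_def by (simp flip: exp_add)
  finally show ?thesis using \<open>l > 0\<close> c unfolding l_def by (simp add: field_simps)
qed

lemma gt_center_if_radial_derivative_pos: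
  fixes f :: "'a::real_inner \<Rightarrow> real"
  assumes deriv: "\<And>x. (f has_derivative (\<lambda>h. G x \<bullet> h)) (at x)"
    and radial: "\<And>r \<xi>. 0 < r \<Longrightarrow> r < R \<Longrightarrow> norm \<xi> = 1 \<Longrightarrow> G (a + r *\<^sub>R \<xi>) \<bullet> \<xi> > 0"
    and p: "norm (p - a) < R" "p \<noteq> a"
  shows "f p > f a"
proof -
  define r where "r = norm (p - a)"
  have "r > 0" using p unfolding r_def by simp
  define \<xi> where "\<xi> = (1 / r) *\<^sub>R (p - a)"
  have "norm \<xi> = 1" "a + r *\<^sub>R \<xi> = p" unfolding \<xi>_def r_def using \<open>r > 0\<close> r_def by auto
  define \<phi> where "\<phi> s = f (a + s *\<^sub>R \<xi>)" for s
  have D: "(\<phi> has_real_derivative (G (a + s *\<^sub>R \<xi>) \<bullet> \<xi>)) (at s)" for s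
  proof -
    have "((\<lambda>s. a + s *\<^sub>R \<xi>) has_derivative (\<lambda>t. t *\<^sub>R \<xi>)) (at s)"
      by (intro derivative_eq_intros) auto
    then have "(\<phi> has_derivative (\<lambda>t. G (a + s *\<^sub>R \<xi>) \<bullet> (t *\<^sub>R \<xi>))) (at s)"
      unfolding \<phi>_def using has_derivative_compose deriv by blast
    moreover have "(\<lambda>t. G (a + s *\<^sub>R \<xi>) \<bullet> (t *\<^sub>R \<xi>)) = (*) (G (a + s *\<^sub>R \<xi>) \<bullet> \<xi>)"
      by (auto simp: mult.commute)
    ultimately show ?thesis by (simp add: has_field_derivative_def)
  qed
  obtain z where z: "0 < z" "z < r" "\<phi> r - \<phi> 0 = r * (G (a + z *\<^sub>R \<xi>) \<bullet> \<xi>)"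
    using MVT2[OF \<open>r > 0\<close> D] by auto
  moreover have "G (a + z *\<^sub>R \<xi>) \<bullet> \<xi> > 0" using radial[OF z(1) _ \<open>norm \<xi> = 1\<close>] z(2) p unfolding r_def by simp
  ultimately have "\<phi> r - \<phi> 0 > 0" using \<open>r > 0\<close> by simp
  then show ?thesis using \<open>a + r *\<^sub>R \<xi> = p\<close> unfolding \<phi>_def by simp
qed

lemma limit_potential_le_zero_if_finite_energy:
  assumes P: "(\<integral>\<^sup>+x. ennreal (energy_density W c U U' x) \<partial>lborel) = ennreal P" "0 \<le> P"
    and "c \<ge> 0"
    and lim: "((\<lambda>x. W (U x)) \<longlongrightarrow> w) at_top"
  shows "w \<le> 0"
proof (rule ccontr)
  assume "\<not> w \<le> 0"
  then have "\<forall>\<^sub>F x in at_top. w / 2 < W (U x)" using order_tendstoD(1)[OF lim, of "w / 2"] by simp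
  then obtain M0 where M0: "\<And>x. x \<ge> M0 \<Longrightarrow> w / 2 < W (U x)"
    unfolding eventually_at_top_linorder by blast
  define M where "M = max M0 0"
  have M: "M \<ge> 0" "\<And>x. x \<ge> M \<Longrightarrow> w / 2 < W (U x)" using M0 unfolding M_def by auto
  define n where "n = 2 * P / w + 1"
  have "n > 0" unfolding n_def using \<open>\<not> w \<le> 0\<close> P(2) by (simp add: field_simps)
  have "ennreal (w / 2 * n) = ennreal (w / 2) * emeasure lborel {M..M + n}"
    using ennreal_mult[of "w / 2" n] \<open>n > 0\<close> \<open>\<not> w \<le> 0\<close> by simp
  also have "\<dots> = (\<integral>\<^sup>+x. ennreal (w / 2) * indicator {M..M + n} x \<partial>lborel)"
    by (simp add: nn_integral_cmult_indicator)
  also have "\<dots> \<le> (\<integral>\<^sup>+x. ennreal (energy_density W c U U' x) \<partial>lborel)"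
  proof (intro nn_integral_mono)
    fix x
    show "ennreal (w / 2) * indicator {M..M + n} x \<le> ennreal (energy_density W c U U' x)"
    proof (cases "x \<in> {M..M + n}")
      case True
      then have "w / 2 < W (U x)" "x \<ge> 0" using M by auto
      moreover have "1 \<le> exp (c * x)" using \<open>c \<ge> 0\<close> \<open>x \<ge> 0\<close> by simp
      moreover have "W (U x) > 0" using \<open>w / 2 < W (U x)\<close> \<open>\<not> w \<le> 0\<close> by simp
      ultimately have "w / 2 \<le> W (U x) * exp (c * x)"
        using \<open>w / 2 < W (U x)\<close> by (smt (verit) mult_le_cancel_left1)
      also have "\<dots> \<le> energy_density W c U U' x" unfolding energy_density_def by (simp add: algebra_simps)
      finally show ?thesis using True by (simp add: ennreal_leI)
    qed simp
  qed
  finally have "w / 2 * n \<le> P" using P ennreal_le_iff by simp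
  moreover have "w / 2 * n = P + w / 2" unfolding n_def using \<open>\<not> w \<le> 0\<close> by (simp add: field_simps)
  ultimately show False using \<open>\<not> w \<le> 0\<close> by simp
qed

lemma tendsto_center_if_finite_energy:
  fixes U U' :: "real \<Rightarrow> 'a::euclidean_space"
  assumes wd: "weak_deriv U U'" and Wc: "continuous_on UNIV W" and c: "c > 0"
    and deriv: "\<And>x. (W has_derivative (\<lambda>h. G x \<bullet> h)) (at x)"
    and radial: "\<And>r \<xi>. 0 < r \<Longrightarrow> r < R \<Longrightarrow> norm \<xi> = 1 \<Longrightarrow> G (a + r *\<^sub>R \<xi>) \<bullet> \<xi> > 0"
    and "r < R" and Wa: "W a = 0" and nonneg: "\<forall>u\<in>cball a r. W u \<ge> 0"
    and near: "\<And>x. x \<ge> L \<Longrightarrow> norm (U x - a) \<le> r"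
    and P: "(\<integral>\<^sup>+x. ennreal (energy_density W c U U' x) \<partial>lborel) = ennreal P" "P \<ge> 0"
  shows "(U \<longlongrightarrow> a) at_top"
proof -
  have in_ball: "U x \<in> cball a r" if "x \<ge> L" for x
    using near[OF that] by (simp add: dist_norm norm_minus_commute)
  have tail_nonneg: "W (U x) \<ge> 0" if "x \<ge> L" for x using nonneg in_ball[OF that] by blast
  have "\<exists>p. (U \<longlongrightarrow> p) at_top"
  proof (rule tendsto_at_top_of_oscillation_bound)
    show "((\<lambda>T. exp (-(c * T / 2)) * (P + 1 / (2 * c))) \<longlongrightarrow> 0) at_top"
      using c by real_asymp
    show "dist (U y) (U T) \<le> exp (-(c * T / 2)) * (P + 1 / (2 * c))" if "L \<le> T" "T \<le> y" for T y
      using weak_deriv_tail_oscillation_bound[OF wd Wc c tail_nonneg P that]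
      by (simp add: dist_norm mult.commute)
  qed
  then obtain p where p: "(U \<longlongrightarrow> p) at_top" by blast
  have "\<forall>\<^sub>F x in at_top. U x \<in> cball a r"
    unfolding eventually_at_top_linorder using in_ball by blast
  then have "p \<in> cball a r" by (rule Lim_in_closed_set[OF closed_cball _ _ p]) simp
  have "((\<lambda>x. W (U x)) \<longlongrightarrow> W p) at_top"
    using Wc p by (metis UNIV_I continuous_on_def isCont_tendsto_compose continuous_on_eq_continuous_at open_UNIV)
  then have "W p \<le> 0" using limit_potential_le_zero_if_finite_energy[OF P] c by simp
  have "p = a"
  proof (rule ccontr)
    assume "p \<noteq> a"
    have "norm (p - a) < R"
      using \<open>p \<in> cball a r\<close> \<open>r < R\<close> by (simp add: dist_norm norm_minus_commute)
    then have "W p > W a" using gt_center_if_radial_derivative_pos[OF deriv radial] \<open>p \<noteq> a\<close> by blast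
    then show False using \<open>W p \<le> 0\<close> Wa by simp
  qed
  then show ?thesis using p by simp
qed

section \<open>Splicing in the constant state at \<open>-\<infinity>\<close>\<close>

definition left_splice :: "'a::real_vector \<Rightarrow> (real \<Rightarrow> 'a) \<Rightarrow> real \<Rightarrow> real \<Rightarrow> 'a" where
  "left_splice a U T x =
     (if x \<le> T - 1 then a else if x \<le> T then a + (x - (T - 1)) *\<^sub>R (U T - a) else U x)"

definition left_splice_deriv :: "'a::real_vector \<Rightarrow> (real \<Rightarrow> 'a) \<Rightarrow> (real \<Rightarrow> 'a) \<Rightarrow> real \<Rightarrow> real \<Rightarrow> 'a" where
  "left_splice_deriv a U U' T x = (if x < T - 1 then 0 else if x < T then U T - a else U' x)"

lemma left_splice_right:
  "T \<le> x \<Longrightarrow> left_splice a U T x = U x" "T \<le> x \<Longrightarrow> left_splice_deriv a U U' T x = U' x"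
  unfolding left_splice_def left_splice_deriv_def by (cases "x = T"; simp)+

lemma left_splice_segment:
  assumes "T - 1 \<le> x" "x \<le> T"
  shows "left_splice a U T x = a + (x - (T - 1)) *\<^sub>R (U T - a)"
    and "dist a (left_splice a U T x) \<le> norm (U T - a)"
proof -
  show eq: "left_splice a U T x = a + (x - (T - 1)) *\<^sub>R (U T - a)"
    using assms unfolding left_splice_def by (cases "x \<le> T - 1") auto
  have "dist a (left_splice a U T x) = \<bar>x - (T - 1)\<bar> * norm (U T - a)" by (simp add: eq dist_norm)
  also have "\<dots> \<le> 1 * norm (U T - a)" using assms by (intro mult_right_mono) auto
  finally show "dist a (left_splice a U T x) \<le> norm (U T - a)" by simp
qed

lemma weak_deriv_left_splice:
  assumes "weak_deriv U U'"
  shows "weak_deriv (left_splice a U T) (left_splice_deriv a U U' T)"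
proof -
  have const: "weak_deriv_on (UNIV \<inter> {..T} \<inter> {..T - 1}) (left_splice a U T) (\<lambda>_. 0)"
    by (rule weak_deriv_on_affine[where p=a]) (auto simp: left_splice_def)
  have segment: "weak_deriv_on (UNIV \<inter> {..T} \<inter> {T - 1..}) (left_splice a U T) (\<lambda>_. U T - a)"
    by (rule weak_deriv_on_affine[where p="a - (T - 1) *\<^sub>R (U T - a)"])
      (auto simp: left_splice_segment(1) algebra_simps)
  have left: "weak_deriv_on (UNIV \<inter> {..T}) (left_splice a U T) (\<lambda>x. if x < T - 1 then 0 else U T - a)"
    by (rule weak_deriv_on_glue[OF const segment]) auto
  have "weak_deriv_on (UNIV \<inter> {T..}) U U'"
    using assms weak_deriv_on_subset unfolding weak_deriv_iff_weak_deriv_on_UNIV by blast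
  then have right: "weak_deriv_on (UNIV \<inter> {T..}) (left_splice a U T) U'"
    by (rule weak_deriv_on_cong) (simp add: left_splice_right)
  have "weak_deriv_on UNIV (left_splice a U T) (left_splice_deriv a U U' T)"
    by (rule weak_deriv_on_glue[OF left right]) (auto simp: left_splice_deriv_def)
  then show ?thesis unfolding weak_deriv_iff_weak_deriv_on_UNIV .
qed

lemma left_splice_in_Xinf:
  assumes "weak_deriv U U'" "(U \<longlongrightarrow> b) at_top"
  shows "left_splice a U T \<in> Xinf a b"
  unfolding Xinf_def H1loc_def
proof (intro CollectI conjI)
  show "\<exists>V'. weak_deriv (left_splice a U T) V'" using weak_deriv_left_splice[OF assms(1)] by blast
  show "(left_splice a U T \<longlongrightarrow> b) at_top"
  proof (rule Lim_transform_eventually[OF assms(2)])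
    show "\<forall>\<^sub>F x in at_top. U x = left_splice a U T x"
      unfolding eventually_at_top_linorder by (intro exI[of _ T]) (simp add: left_splice_right)
  qed
  show "(left_splice a U T \<longlongrightarrow> a) at_bot"
  proof (rule tendsto_eventually)
    show "\<forall>\<^sub>F x in at_bot. left_splice a U T x = a"
      unfolding eventually_at_bot_linorder by (intro exI[of _ "T - 1"]) (simp add: left_splice_def)
  qed
qed

lemma left_splice_energy_density_le:
  assumes "c \<ge> 0" and nonpos: "\<forall>u\<in>cball a r. W u \<le> 0" and near: "norm (U T - a) \<le> r"
  shows "energy_density W c (left_splice a U T) (left_splice_deriv a U U' T) x
           \<le> max (energy_density W c U U' x) 0 + r\<^sup>2 / 2 * exp (c * T) * indicator {T - 1..T} x"
proof -
  have "0 \<le> r\<^sup>2 / 2 * exp (c * T) * indicator {T - 1..T} x" by simp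
  consider "T \<le> x" | "T - 1 \<le> x" "x < T" | "x < T - 1" by linarith
  then show ?thesis
  proof cases
    case 1
    then have "energy_density W c (left_splice a U T) (left_splice_deriv a U U' T) x
        = energy_density W c U U' x" by (simp add: energy_density_def left_splice_right)
    with \<open>0 \<le> r\<^sup>2 / 2 * exp (c * T) * indicator {T - 1..T} x\<close> show ?thesis
      using max.cobounded1[of "energy_density W c U U' x" 0] by linarith
  next
    case 2
    have "W (left_splice a U T x) \<le> 0"
      using nonpos left_splice_segment(2)[of T x a U] near 2 by auto
    then have "energy_density W c (left_splice a U T) (left_splice_deriv a U U' T) x
        \<le> (1/2 * (norm (U T - a))\<^sup>2) * exp (c * x)"
      using 2 unfolding energy_density_def left_splice_deriv_def by (intro mult_right_mono) auto
    also have "\<dots> \<le> (r\<^sup>2 / 2) * exp (c * T)"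
      using 2 \<open>c \<ge> 0\<close> near by (intro mult_mono) (auto simp: power_mono mult_left_mono)
    finally show ?thesis using 2 by simp
  next
    case 3
    have "0 \<le> r" using order_trans[OF norm_ge_zero near] .
    then have "W a \<le> 0" using nonpos by simp
    then show ?thesis
      using 3 mult_nonpos_nonneg[OF \<open>W a \<le> 0\<close>, of "exp (c * x)"]
      by (simp add: energy_density_def left_splice_def left_splice_deriv_def le_max_iff_disj)
  qed
qed

lemma neg_energy_density_le_left_splice:
  assumes "c \<ge> 0" and min: "\<forall>u. W a \<le> W u" and "W a \<le> 0"
  shows "- energy_density W c U U' x
           \<le> max (- energy_density W c (left_splice a U T) (left_splice_deriv a U U' T) x) 0
             + - W a * exp (c * T) * indicator {T - 1..T} x"
proof -
  have K: "0 \<le> - W a * exp (c * T) * indicator {T - 1..T} x"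
    using \<open>W a \<le> 0\<close> by (intro mult_nonneg_nonneg) auto
  have "W a * exp (c * x) \<le> (1/2 * (norm (U' x))\<^sup>2 + W (U x)) * exp (c * x)"
    using min by (intro mult_right_mono) (auto simp: add_increasing)
  then have below: "- energy_density W c U U' x \<le> - W a * exp (c * x)"
    unfolding energy_density_def by linarith
  consider "T \<le> x" | "T - 1 \<le> x" "x < T" | "x < T - 1" by linarith
  then show ?thesis
  proof cases
    case 1
    then have "energy_density W c (left_splice a U T) (left_splice_deriv a U U' T) x
        = energy_density W c U U' x" by (simp add: energy_density_def left_splice_right)
    with K show ?thesis
      using max.cobounded1[of "- energy_density W c U U' x" 0] by linarith
  next
    case 2
    have "- W a * exp (c * x) \<le> - W a * exp (c * T)"
      using 2 \<open>c \<ge> 0\<close> \<open>W a \<le> 0\<close> by (intro mult_left_mono) (auto simp: mult_left_mono)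
    then show ?thesis using below 2 by simp
  next
    case 3
    then have "energy_density W c (left_splice a U T) (left_splice_deriv a U U' T) x = W a * exp (c * x)"
      by (simp add: energy_density_def left_splice_def left_splice_deriv_def)
    with K show ?thesis using below max.cobounded1[of "- (W a * exp (c * x))" 0] by simp
  qed
qed

lemma left_splice_positive_energy_le:
  fixes U U' :: "real \<Rightarrow> 'a::euclidean_space"
  assumes wd: "weak_deriv U U'" and Wc: "continuous_on UNIV W" and "c \<ge> 0"
    and nonpos: "\<forall>u\<in>cball a r. W u \<le> 0" and near: "norm (U T - a) \<le> r"
  shows "(\<integral>\<^sup>+x. ennreal (energy_density W c (left_splice a U T) (left_splice_deriv a U U' T) x) \<partial>lborel)
           \<le> (\<integral>\<^sup>+x. ennreal (energy_density W c U U' x) \<partial>lborel) + ennreal (r\<^sup>2 / 2 * exp (c * T))"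
proof -
  define K where "K = r\<^sup>2 / 2 * exp (c * T)"
  have "K \<ge> 0" unfolding K_def by simp
  have K_meas: "(\<lambda>x. K * indicator {T - 1..T} x) \<in> borel_measurable borel"
    by (intro borel_measurable_times borel_measurable_const borel_measurable_indicator) auto
  have pw: "energy_density W c (left_splice a U T) (left_splice_deriv a U U' T) x
      \<le> 1 * max (energy_density W c U U' x) 0 + K * indicator {T - 1..T} x" for x
    using left_splice_energy_density_le[where W=W and a=a and r=r and U=U and T=T, OF \<open>c \<ge> 0\<close> nonpos near]
    unfolding K_def by simp
  have "(\<integral>\<^sup>+x. ennreal (energy_density W c (left_splice a U T) (left_splice_deriv a U U' T) x) \<partial>lborel)
      \<le> ennreal 1 * (\<integral>\<^sup>+x. ennreal (energy_density W c U U' x) \<partial>lborel)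
        + (\<integral>\<^sup>+x. ennreal (K * indicator {T - 1..T} x) \<partial>lborel)"
    by (rule nn_integral_le_cmult_pos_part_add[OF energy_density_measurable[OF wd Wc] K_meas _ _ pw])
      (use \<open>K \<ge> 0\<close> in auto)
  then show ?thesis using nn_integral_const_indicator_unit_interval[OF \<open>K \<ge> 0\<close>] unfolding K_def by simp
qed

lemma left_splice_negative_energy_ge:
  fixes U U' :: "real \<Rightarrow> 'a::euclidean_space"
  assumes wd: "weak_deriv U U'" and Wc: "continuous_on UNIV W" and "c \<ge> 0"
    and min: "\<forall>u. W a \<le> W u" and "W a \<le> 0"
  shows "(\<integral>\<^sup>+x. ennreal (- energy_density W c U U' x) \<partial>lborel)
           \<le> (\<integral>\<^sup>+x. ennreal (- energy_density W c (left_splice a U T) (left_splice_deriv a U U' T) x) \<partial>lborel)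
             + ennreal (- W a * exp (c * T))"
proof -
  define K where "K = - W a * exp (c * T)"
  have "K \<ge> 0" unfolding K_def using \<open>W a \<le> 0\<close> by (simp add: mult_nonpos_nonneg)
  have K_meas: "(\<lambda>x. K * indicator {T - 1..T} x) \<in> borel_measurable borel"
    by (intro borel_measurable_times borel_measurable_const borel_measurable_indicator) auto
  have pw: "- energy_density W c U U' x
      \<le> 1 * max (- energy_density W c (left_splice a U T) (left_splice_deriv a U U' T) x) 0
        + K * indicator {T - 1..T} x" for x
    using neg_energy_density_le_left_splice[where W=W and a=a, OF \<open>c \<ge> 0\<close> min \<open>W a \<le> 0\<close>]
    unfolding K_def by simp
  have meas: "(\<lambda>x. - energy_density W c (left_splice a U T) (left_splice_deriv a U U' T) x)
      \<in> borel_measurable lebesgue"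
    using borel_measurable_uminus[OF energy_density_measurable[OF weak_deriv_left_splice[OF wd] Wc]] .
  have "(\<integral>\<^sup>+x. ennreal (- energy_density W c U U' x) \<partial>lborel)
      \<le> ennreal 1 * (\<integral>\<^sup>+x. ennreal (- energy_density W c (left_splice a U T) (left_splice_deriv a U U' T) x) \<partial>lborel)
        + (\<integral>\<^sup>+x. ennreal (K * indicator {T - 1..T} x) \<partial>lborel)"
    by (rule nn_integral_le_cmult_pos_part_add[OF meas K_meas _ _ pw]) (use \<open>K \<ge> 0\<close> in auto)
  then show ?thesis using nn_integral_const_indicator_unit_interval[OF \<open>K \<ge> 0\<close>] unfolding K_def by simp
qed

lemma energy_left_splice_less_zero:
  fixes U U' :: "real \<Rightarrow> 'a::euclidean_space"
  assumes wd: "weak_deriv U U'" and Wc: "continuous_on UNIV W" and c: "c \<ge> 0"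
    and min: "\<forall>u. W a \<le> W u" and nonpos: "\<forall>u\<in>cball a r. W u \<le> 0" and near: "norm (U T - a) \<le> r"
    and gap: "(\<integral>\<^sup>+x. ennreal (energy_density W c U U' x) \<partial>lborel) + ennreal ((r\<^sup>2 / 2 - W a) * exp (c * T))
              < (\<integral>\<^sup>+x. ennreal (- energy_density W c U U' x) \<partial>lborel)"
  shows "energy W c (left_splice a U T) (left_splice_deriv a U U' T) < 0"
proof -
  define K1 where "K1 = r\<^sup>2 / 2 * exp (c * T)"
  define K2 where "K2 = - W a * exp (c * T)"
  have "0 \<le> r" using order_trans[OF norm_ge_zero near] .
  then have "W a \<le> 0" using nonpos by simp
  then have "0 \<le> K1" "0 \<le> K2" unfolding K1_def K2_def by (auto simp: mult_nonpos_nonneg)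
  let ?Pg = "\<integral>\<^sup>+x. ennreal (energy_density W c (left_splice a U T) (left_splice_deriv a U U' T) x) \<partial>lborel"
  let ?Ng = "\<integral>\<^sup>+x. ennreal (- energy_density W c (left_splice a U T) (left_splice_deriv a U U' T) x) \<partial>lborel"
  have "ennreal K2 + ?Pg \<le> ennreal K2 + ((\<integral>\<^sup>+x. ennreal (energy_density W c U U' x) \<partial>lborel) + ennreal K1)"
    using left_splice_positive_energy_le[OF wd Wc c nonpos near] unfolding K1_def by (rule add_left_mono)
  also have "\<dots> = (\<integral>\<^sup>+x. ennreal (energy_density W c U U' x) \<partial>lborel) + ennreal ((r\<^sup>2 / 2 - W a) * exp (c * T))"
    using \<open>0 \<le> K1\<close> \<open>0 \<le> K2\<close> unfolding K1_def K2_def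
    by (simp add: ennreal_plus[symmetric] algebra_simps add.left_commute)
  also have "\<dots> < (\<integral>\<^sup>+x. ennreal (- energy_density W c U U' x) \<partial>lborel)" by (rule gap)
  also have "\<dots> \<le> ennreal K2 + ?Ng"
    using left_splice_negative_energy_ge[OF wd Wc c min \<open>W a \<le> 0\<close>] unfolding K2_def by (simp add: add.commute)
  finally have "?Pg < ?Ng" by (simp add: ennreal_add_left_cancel_less)
  then show ?thesis unfolding energy_less_zero_iff .
qed

lemma ennreal_less_imp_add_pos_less:
  assumes "ennreal p < N" "0 \<le> p"
  obtains \<delta> where "\<delta> > 0" "ennreal p + ennreal \<delta> < N"
proof -
  obtain z where z: "ennreal p < z" "z < N" using dense[OF assms(1)] by blast
  then obtain q where q: "z = ennreal q" "0 \<le> q" by (cases z) (auto simp: top_unique)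
  then have "p < q" using z(1) assms(2) by (simp add: ennreal_less_iff)
  then have "ennreal p + ennreal (q - p) = z" using q assms(2) by (simp flip: ennreal_plus)
  then show thesis using that[of "q - p"] \<open>p < q\<close> z(2) by simp
qed

lemma negative_energy_in_Xinf_of_XL:
  fixes W :: "'a::euclidean_space \<Rightarrow> real" and U U' :: "real \<Rightarrow> 'a"
  assumes Wc: "continuous_on UNIV W"
    and deriv: "\<And>x. (W has_derivative (\<lambda>h. G x \<bullet> h)) (at x)"
    and radial: "\<And>r \<xi>. 0 < r \<Longrightarrow> r < R \<Longrightarrow> norm \<xi> = 1 \<Longrightarrow> G (ap + r *\<^sub>R \<xi>) \<bullet> \<xi> > 0"
    and min: "\<forall>u. W am \<le> W u" and Wap: "W ap = 0" and "r0 < R"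
    and nonneg_p: "\<forall>u\<in>cball ap r0. W u \<ge> 0" and neg_m: "\<forall>u\<in>cball am r0. W u < 0"
    and c: "c > 0" and UX: "U \<in> XL am ap r0 L" and wd: "weak_deriv U U'"
    and en: "energy W c U U' < 0"
  shows "\<exists>V V'. V \<in> Xinf am ap \<and> weak_deriv V V' \<and> energy W c V V' < 0"
proof -
  have near_p: "\<And>x. x \<ge> L \<Longrightarrow> norm (U x - ap) \<le> r0"
    and near_m: "\<And>x. x \<le> -L \<Longrightarrow> norm (U x - am) \<le> r0"
    using UX unfolding XL_def by auto
  let ?Pf = "\<integral>\<^sup>+x. ennreal (energy_density W c U U' x) \<partial>lborel"
  let ?Nf = "\<integral>\<^sup>+x. ennreal (- energy_density W c U U' x) \<partial>lborel"
  have "?Pf < ?Nf" using en unfolding energy_less_zero_iff .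
  moreover from this have "?Pf \<noteq> top" by (auto simp: top_unique dest: less_imp_le)
  ultimately obtain P where P: "?Pf = ennreal P" "0 \<le> P" by (cases ?Pf) auto
  have "(U \<longlongrightarrow> ap) at_top"
    by (rule tendsto_center_if_finite_energy[OF wd Wc c deriv radial \<open>r0 < R\<close> Wap nonneg_p near_p P])
  obtain \<delta> where "\<delta> > 0" and gap: "?Pf + ennreal \<delta> < ?Nf"
    using ennreal_less_imp_add_pos_less \<open>?Pf < ?Nf\<close> P by metis
  have "((\<lambda>T. (r0\<^sup>2 / 2 - W am) * exp (c * T)) \<longlongrightarrow> 0) at_bot" using c by real_asymp
  then have "\<forall>\<^sub>F T in at_bot. (r0\<^sup>2 / 2 - W am) * exp (c * T) < \<delta>"
    using \<open>\<delta> > 0\<close> by (rule order_tendstoD(2))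
  moreover have "\<forall>\<^sub>F T in at_bot. T \<le> -L" unfolding eventually_at_bot_linorder by blast
  ultimately have "\<forall>\<^sub>F T in at_bot. (r0\<^sup>2 / 2 - W am) * exp (c * T) < \<delta> \<and> T \<le> -L"
    by (rule eventually_conj)
  then obtain T where T: "(r0\<^sup>2 / 2 - W am) * exp (c * T) < \<delta>" "T \<le> -L"
    unfolding eventually_at_bot_linorder by blast
  have "?Pf + ennreal ((r0\<^sup>2 / 2 - W am) * exp (c * T)) < ?Nf"
    using T(1) gap by (meson add_left_mono ennreal_leI less_imp_le order.strict_trans1)
  then have "energy W c (left_splice am U T) (left_splice_deriv am U U' T) < 0"
    using neg_m near_m[OF T(2)] c by (intro energy_left_splice_less_zero[OF wd Wc _ min]) auto
  then show ?thesis
    using left_splice_in_Xinf[OF wd \<open>(U \<longlongrightarrow> ap) at_top\<close>] weak_deriv_left_splice[OF wd] by blast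
qed

lemma continuous_on_of_C2_on: "C2_on UNIV f G H \<Longrightarrow> continuous_on UNIV f"
  unfolding C2_on_def
  by (meson continuous_at_imp_continuous_on has_derivative_continuous UNIV_I)

lemma Xinf_in_XL:
  assumes "U \<in> Xinf am ap" "r > 0"
  obtains L where "L \<ge> 1" "U \<in> XL am ap r L"
proof -
  have "H1loc U" "(U \<longlongrightarrow> ap) at_top" "(U \<longlongrightarrow> am) at_bot" using assms(1) unfolding Xinf_def by auto
  then obtain M1 M2 where M1: "\<And>x. x \<ge> M1 \<Longrightarrow> dist (U x) ap < r" and M2: "\<And>x. x \<le> M2 \<Longrightarrow> dist (U x) am < r"
    using assms(2) unfolding tendsto_iff eventually_at_top_linorder eventually_at_bot_linorder by metis
  have "U \<in> XL am ap r (max 1 (max M1 (-M2)))"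
    unfolding XL_def using \<open>H1loc U\<close> M1 M2 by (auto simp: dist_norm less_imp_le)
  then show thesis using that[of "max 1 (max M1 (-M2))"] by simp
qed

theorem mainTheorem15:
  fixes W :: "'a::euclidean_space \<Rightarrow> real" and G :: "'a \<Rightarrow> 'a" and H :: "'a \<Rightarrow> 'a \<Rightarrow>\<^sub>L 'a"
    and am ap :: 'a and R0 r0 :: real
  assumes C2: "C2_on UNIV W G H"
    and min_m: "\<forall>u. W am \<le> W u"
    and min_p: "\<exists>\<epsilon>>0. \<forall>u\<in>ball ap \<epsilon>. W ap \<le> W u"
    and Wam: "W am < 0" and Wap: "W ap = 0"
    and hstar_sets: "\<exists>\<alpha>0>0. \<exists>Cm Cp :: real \<Rightarrow> 'a set.
         (\<forall>\<alpha>\<in>{0<..\<alpha>0}.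
            {u. W u = \<alpha>} = frontier (Cm \<alpha>) \<union> frontier (Cp \<alpha>) \<and>
            {u. W u \<le> \<alpha>} = Cm \<alpha> \<union> Cp \<alpha> \<and> Cm \<alpha> \<inter> Cp \<alpha> = {} \<and>
            compact (Cm \<alpha>) \<and> compact (Cp \<alpha>) \<and> convex (Cm \<alpha>) \<and> convex (Cp \<alpha>) \<and>
            C2_boundary (Cm \<alpha>) \<and> C2_boundary (Cp \<alpha>) \<and> am \<in> Cm \<alpha> \<and> ap \<in> Cp \<alpha>) \<and>
         (\<forall>r \<xi>. r > 0 \<longrightarrow> norm \<xi> = 1 \<longrightarrow> am + r *\<^sub>R \<xi> \<in> Cm \<alpha>0 \<longrightarrow> G (am + r *\<^sub>R \<xi>) \<bullet> \<xi> > 0)"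
    and hstar_C0: "\<exists>c0>0. \<forall>p\<in>frontier (connected_component_set {u. W u \<le> 0} am).
         (\<exists>n. outward_normal (connected_component_set {u. W u \<le> 0} am) p n) \<and>
         (\<forall>n. outward_normal (connected_component_set {u. W u \<le> 0} am) p n \<longrightarrow> G p \<bullet> n \<ge> c0) \<and>
         (\<forall>\<xi>. \<xi> \<bullet> blinfun_apply (H p) \<xi> \<ge> c0 * (norm \<xi>)\<^sup>2)"
    and R0: "R0 > 0"
    and h: "\<forall>r \<xi>. 0 < r \<longrightarrow> r < R0 \<longrightarrow> norm \<xi> = 1 \<longrightarrow>
              G (am + r *\<^sub>R \<xi>) \<bullet> \<xi> > 0 \<and> G (ap + r *\<^sub>R \<xi>) \<bullet> \<xi> > 0"
    and r0: "0 < r0" "r0 < R0"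
    and r0p: "\<forall>u\<in>cball ap r0. W u \<ge> 0"
    and r0m: "\<forall>u\<in>cball am r0. W u < 0"
  shows "Sup (ereal ` {c. c > 0 \<and> (\<exists>L\<ge>1. Inf (energies W c (XL am ap r0 L)) < 0)})
       = Sup (ereal ` {c. c > 0 \<and> Inf (energies W c (Xinf am ap)) < 0})"
proof -
  have Wc: "continuous_on UNIV W" using continuous_on_of_C2_on[OF C2] .
  have deriv: "\<And>x. (W has_derivative (\<lambda>h. G x \<bullet> h)) (at x)" using C2 unfolding C2_on_def by blast
  have radial: "\<And>r \<xi>. 0 < r \<Longrightarrow> r < R0 \<Longrightarrow> norm \<xi> = 1 \<Longrightarrow> G (ap + r *\<^sub>R \<xi>) \<bullet> \<xi> > 0" using h by blast
  have "(\<exists>L\<ge>1. Inf (energies W c (XL am ap r0 L)) < 0) \<longleftrightarrow> Inf (energies W c (Xinf am ap)) < 0"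
    if "c > 0" for c
    unfolding Inf_energies_less_zero_iff
    using negative_energy_in_Xinf_of_XL[OF Wc deriv radial min_m Wap r0(2) r0p r0m that]
      Xinf_in_XL[OF _ r0(1)] by metis
  then show ?thesis by (metis (lifting))
qed

end
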